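(* Let $P$ be a finite poset and $f\colon\mathcal{J}(P)\to\mathbb{R}$ a real-valued statistic such that $f\equiv^q c(q)$ for some $c(q)\in\mathbb{R}(q)$. Then for any positive integers $r,s$ and any cyclic permutation $\theta$ of $\mathbf{F}_0\cup\mathbf{F}_1$, the statistic $f\colon\mathcal{J}_{r,s}(P)\to\mathbb{R}$ is $c(r/s)$-mesic under the $q$-rowmotion operator $\rho\colon\mathcal{J}_{r,s}(P)\to\mathcal{J}_{r,s}(P)$.
   Context: $\mathcal{J}(P)$ is the set of order ideals of $P$. For $p\in P$, $I\in\mathcal{J}(P)$: $T_p^+(I)=1$ if $p$ is minimal in $P\setminus I$, else $0$; $T_p^-(I)=1$ if $p$ is maximal in $I$, else $0$; $T_p^q=T_p^+-qT_p^-$ with $q$ an indeterminate. For $f,g\colon\mathcal{J}(P)\to\mathbb{R}(q)$, $f\equiv^q g$ means $f-g=\sum_{p\in P}c_p(q)T_p^q$ for some $c_p(q)\in\mathbb{R}(q)$; an element of $\mathbb{R}(q)$ denotes the corresponding constant function. $\mathbf{F}_0,\mathbf{F}_1$ are disjoint sets of sizes $s$ and $r$; $\theta$ is a single $(r+s)$-cycle on $\mathbf{F}_0\cup\mathbf{F}_1$. $\mathcal{J}_{r,s}(P)$ is the set of labelings $L\colon P\to\mathbf{F}_0\cup\mathbf{F}_1$ with $L^{-1}(\mathbf{F}_0)$ an order ideal. $x$ is active in $L$ if it is maximal in $L^{-1}(\mathbf{F}_0)$ or minimal in $L^{-1}(\mathbf{F}_1)$; the toggle $\tau_p$ replaces $L(p)$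 by $\theta(L(p))$ if $p$ is active and otherwise does nothing; $\rho=\tau_{p_1}\circ\cdots\circ\tau_{p_n}$ for a linear extension $p_1,\dots,p_n$ of $P$. A statistic $g$ on $\mathcal{J}(P)$ is viewed on $\mathcal{J}_{r,s}(P)$ via $g(L)=g(L^{-1}(\mathbf{F}_0))$. A statistic is $c$-mesic if its average over every orbit equals $c$. *)

theory Defs
  imports Main "HOL-Computational_Algebra.Polynomial" "HOL-Computational_Algebra.Fraction_Field"
begin

text \<open>The poset P is a finite type 'a with its order. Order ideals of P.\<close>
definition order_ideals :: "('a::order) set set" where
  "order_ideals = {I. \<forall>x y. x \<le> y \<longrightarrow> y \<in> I \<longrightarrow> x \<in> I}"

text \<open>Rational functions R(q) are "real poly fract"; q is the indeterminate.\<close>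
definition qvar :: "real poly fract" where
  "qvar = Fract [:0, 1:] 1"

definition const_fract :: "real \<Rightarrow> real poly fract" where
  "const_fract a = Fract [:a:] 1"

definition Tplus :: "'a::order \<Rightarrow> 'a set \<Rightarrow> real poly fract" where
  "Tplus p I = (if p \<notin> I \<and> (\<forall>y. y < p \<longrightarrow> y \<in> I) then 1 else 0)"

definition Tminus :: "'a::order \<Rightarrow> 'a set \<Rightarrow> real poly fract" where
  "Tminus p I = (if p \<in> I \<and> (\<forall>y. p < y \<longrightarrow> y \<notin> I) then 1 else 0)"

definition Tq :: "'a::order \<Rightarrow> 'a set \<Rightarrow> real poly fract" where
  "Tq p I = Tplus p I - qvar * Tminus p I"

definition q_equiv :: "('a::{finite,order} set \<Rightarrow> real poly fract) \<Rightarrow> ('a set \<Rightarrow> real poly fract) \<Rightarrow> bool" where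
  "q_equiv f g \<longleftrightarrow> (\<exists>cp :: 'a \<Rightarrow> real poly fract.
      \<forall>I \<in> order_ideals. f I - g I = (\<Sum>p\<in>UNIV. cp p * Tq p I))"

definition fract_defined_at :: "real poly fract \<Rightarrow> real \<Rightarrow> bool" where
  "fract_defined_at c x \<longleftrightarrow> (\<exists>a b. c = Fract a b \<and> poly b x \<noteq> 0)"

definition fract_eval :: "real poly fract \<Rightarrow> real \<Rightarrow> real" where
  "fract_eval c x = (THE v. \<exists>a b. c = Fract a b \<and> poly b x \<noteq> 0 \<and> v = poly a x / poly b x)"

definition single_cycle_on :: "('b \<Rightarrow> 'b) \<Rightarrow> 'b set \<Rightarrow> bool" where
  "single_cycle_on \<theta> S \<longleftrightarrow> bij_betw \<theta> S S \<and> (\<forall>x. x \<notin> S \<longrightarrow> \<theta> x = x) \<and>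
     (\<forall>x\<in>S. \<forall>y\<in>S. \<exists>n. (\<theta> ^^ n) x = y)"

definition labelings :: "'b set \<Rightarrow> 'b set \<Rightarrow> ('a::order \<Rightarrow> 'b) set" where
  "labelings F0 F1 = {L. (\<forall>x. L x \<in> F0 \<union> F1) \<and> L -` F0 \<in> order_ideals}"

definition active :: "'b set \<Rightarrow> 'b set \<Rightarrow> ('a::order \<Rightarrow> 'b) \<Rightarrow> 'a \<Rightarrow> bool" where
  "active F0 F1 L x \<longleftrightarrow>
     (L x \<in> F0 \<and> (\<forall>y. x < y \<longrightarrow> L y \<notin> F0)) \<or>
     (L x \<in> F1 \<and> (\<forall>y. y < x \<longrightarrow> L y \<notin> F1))"

definition toggle :: "'b set \<Rightarrow> 'b set \<Rightarrow> ('b \<Rightarrow> 'b) \<Rightarrow> 'a::order \<Rightarrow> ('a \<Rightarrow> 'b) \<Rightarrow> ('a \<Rightarrow> 'b)" where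
  "toggle F0 F1 \<theta> p L = (if active F0 F1 L p then L(p := \<theta> (L p)) else L)"

definition linear_extension :: "'a::{finite,order} list \<Rightarrow> bool" where
  "linear_extension ps \<longleftrightarrow> distinct ps \<and> set ps = UNIV \<and>
     (\<forall>i j. i < length ps \<longrightarrow> j < length ps \<longrightarrow> ps ! i < ps ! j \<longrightarrow> i < j)"

definition qrowmotion :: "'b set \<Rightarrow> 'b set \<Rightarrow> ('b \<Rightarrow> 'b) \<Rightarrow> 'a::order list \<Rightarrow> ('a \<Rightarrow> 'b) \<Rightarrow> ('a \<Rightarrow> 'b)" where
  "qrowmotion F0 F1 \<theta> ps = foldr (\<lambda>p g. toggle F0 F1 \<theta> p \<circ> g) ps id"

definition orbit_of :: "('c \<Rightarrow> 'c) \<Rightarrow> 'c \<Rightarrow> 'c set" where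
  "orbit_of \<rho> x = {(\<rho> ^^ n) x | n. True}"

definition mesic :: "('c \<Rightarrow> 'c) \<Rightarrow> 'c set \<Rightarrow> ('c \<Rightarrow> real) \<Rightarrow> real \<Rightarrow> bool" where
  "mesic \<rho> X g c \<longleftrightarrow> (\<forall>x\<in>X. (\<Sum>y\<in>orbit_of \<rho> x. g y) / real (card (orbit_of \<rho> x)) = c)"

end

theory Submission
  imports Defs "HOL-Computational_Algebra.Polynomial_Factorial"
begin

text \<open>
  Clearing denominators in \<open>f \<equiv>\<^sup>q c\<close> and cancelling every factor \<open>q - r/s\<close> common to all
  coefficients shows that \<open>f - c(r/s)\<close> is a real linear combination of the functions
  \<open>T\<^sub>p\<^sup>+ - (r/s) T\<^sub>p\<^sup>-\<close> on \<open>J(P)\<close>. The cancellation is possible because these functions are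
  linearly independent for every positive value of \<open>q\<close>: evaluate a vanishing combination at the
  order ideal generated by the elements with negative coefficient.

  It remains to show that every \<open>T\<^sub>p\<^sup>+ - (r/s) T\<^sub>p\<^sup>-\<close> averages to zero along each \<open>\<rho>\<close>-orbit.
  In one application of \<open>\<rho>\<close> the label of \<open>p\<close> either stays or advances one step along \<open>\<theta>\<close>;
  \<open>T\<^sub>p\<^sup>+\<close> of the current ideal detects an advance out of \<open>F\<^sub>1\<close> and \<open>T\<^sub>p\<^sup>-\<close> of the next ideal an
  advance into \<open>F\<^sub>0\<close>. Since \<open>y \<mapsto> [y \<in> F\<^sub>1] - (r/s) [\<theta> y \<in> F\<^sub>0]\<close> sums to \<open>r - (r/s) s = 0\<close> over
  the single cycle \<open>\<theta>\<close>, it is the difference \<open>\<phi> (\<theta> y) - \<phi> y\<close> of a potential \<open>\<phi>\<close>, and the sum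
  of \<open>T\<^sub>p\<^sup>+ - (r/s) T\<^sub>p\<^sup>-\<close> over an orbit telescopes to zero.
\<close>

section \<open>Specialising \<open>q\<close>-equivalence at a positive value of \<open>q\<close>\<close>

definition minimal_outside :: "'a::order \<Rightarrow> 'a set \<Rightarrow> bool" where
  "minimal_outside p I \<longleftrightarrow> p \<notin> I \<and> (\<forall>y. y < p \<longrightarrow> y \<in> I)"

definition maximal_inside :: "'a::order \<Rightarrow> 'a set \<Rightarrow> bool" where
  "maximal_inside p I \<longleftrightarrow> p \<in> I \<and> (\<forall>y. p < y \<longrightarrow> y \<notin> I)"

definition Tq_at :: "real \<Rightarrow> 'a::order \<Rightarrow> 'a set \<Rightarrow> real" where
  "Tq_at x p I = of_bool (minimal_outside p I) - x * of_bool (maximal_inside p I)"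

definition Tq_poly :: "'a::order \<Rightarrow> 'a set \<Rightarrow> real poly" where
  "Tq_poly p I = [:of_bool (minimal_outside p I), - of_bool (maximal_inside p I):]"

lemma poly_Tq_poly [simp]: "poly (Tq_poly p I) x = Tq_at x p I"
  by (simp add: Tq_poly_def Tq_at_def)

lemma Tq_eq_to_fract: "Tq p I = to_fract (Tq_poly p I)"
proof -
  have "Tq_poly p I = [:of_bool (minimal_outside p I):] - [:0, 1:] * [:of_bool (maximal_inside p I):]"
    by (simp add: Tq_poly_def)
  moreover have "Tplus p I = to_fract [:of_bool (minimal_outside p I):]"
    and "Tminus p I = to_fract [:of_bool (maximal_inside p I):]"
    by (simp_all add: Tplus_def Tminus_def minimal_outside_def maximal_inside_def pCons_one)
  ultimately show ?thesis
    by (simp add: Tq_def qvar_def to_fract_def)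
qed

lemma Tq_at_combination_nonneg:
  fixes u :: "'a::{finite,order} \<Rightarrow> real"
  assumes "0 < x" and vanish: "\<forall>I\<in>order_ideals. (\<Sum>p\<in>UNIV. u p * Tq_at x p I) = 0"
  shows "0 \<le> u p"
proof (rule ccontr)
  define N where "N = {p. u p < 0}"
  assume "\<not> 0 \<le> u p"
  then have "N \<noteq> {}" by (auto simp: N_def not_le)
  then obtain m where "m \<in> N" and m_max: "\<And>n. n \<in> N \<Longrightarrow> m \<le> n \<Longrightarrow> m = n"
    using finite_has_maximal[OF finite \<open>N \<noteq> {}\<close>] by blast
  \<comment> \<open>On the down-closure of the negative coefficients every \<open>T\<^sup>+\<close> term is nonnegative,
      while the \<open>T\<^sup>-\<close> terms are nonpositive and the one of \<open>m\<close> is strictly negative.\<close>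
  define I where "I = {y. \<exists>n\<in>N. y \<le> n}"
  have "I \<in> order_ideals" unfolding order_ideals_def I_def using order.trans by blast
  have plus: "0 \<le> u q * of_bool (minimal_outside q I)" for q
    by (auto simp: minimal_outside_def I_def N_def not_less)
  have maximal_in_N: "q \<in> N" if "maximal_inside q I" for q
    using that by (auto simp: maximal_inside_def I_def order.order_iff_strict)
  have minus: "0 \<le> - u q * of_bool (maximal_inside q I)" for q
    using maximal_in_N[of q] by (auto simp: N_def)
  have "maximal_inside m I"
    unfolding maximal_inside_def
  proof (intro conjI allI impI notI)
    show "m \<in> I" using \<open>m \<in> N\<close> by (auto simp: I_def)
    fix y assume "m < y" "y \<in> I"
    then obtain n where "n \<in> N" "m < n" by (auto simp: I_def dest: less_le_trans)
    then show False using m_max[of n] by (simp add: less_le)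
  qed
  then have "0 < (\<Sum>q\<in>UNIV. - u q * of_bool (maximal_inside q I))"
    using \<open>m \<in> N\<close> minus by (intro sum_pos2[of UNIV m]) (simp_all add: N_def)
  moreover have "0 \<le> (\<Sum>q\<in>UNIV. u q * of_bool (minimal_outside q I))"
    using plus by (rule sum_nonneg)
  moreover have "(\<Sum>q\<in>UNIV. u q * Tq_at x q I) = (\<Sum>q\<in>UNIV. u q * of_bool (minimal_outside q I))
      + x * (\<Sum>q\<in>UNIV. - u q * of_bool (maximal_inside q I))"
    unfolding Tq_at_def right_diff_distrib sum_subtractf sum_distrib_left
    by (simp only: mult.left_commute mult_minus_left mult_minus_right sum_negf diff_conv_add_uminus)
  ultimately have "0 < (\<Sum>q\<in>UNIV. u q * Tq_at x q I)"
    using \<open>0 < x\<close> by (simp add: add_nonneg_pos)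
  then show False using vanish \<open>I \<in> order_ideals\<close> by simp
qed

lemma Tq_at_linear_independent:
  fixes u :: "'a::{finite,order} \<Rightarrow> real"
  assumes "0 < x" and "\<forall>I\<in>order_ideals. (\<Sum>p\<in>UNIV. u p * Tq_at x p I) = 0"
  shows "u p = 0"
proof -
  have "0 \<le> u p" using assms by (rule Tq_at_combination_nonneg)
  moreover have "0 \<le> - u p"
    using Tq_at_combination_nonneg[of x "\<lambda>q. - u q"] assms by (simp add: sum_negf)
  ultimately show ?thesis by simp
qed

lemma q_equiv_clear_denominators:
  fixes F G :: "'a::{finite,order} set \<Rightarrow> real poly fract"
  assumes "q_equiv F G"
  obtains D U where "D \<noteq> 0"
    and "\<forall>I\<in>order_ideals. to_fract D * (F I - G I) = to_fract (\<Sum>p\<in>UNIV. U p * Tq_poly p I)"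
proof -
  obtain cp where cp: "\<forall>I\<in>order_ideals. F I - G I = (\<Sum>p\<in>UNIV. cp p * Tq p I)"
    using assms by (auto simp: q_equiv_def)
  have "\<forall>p. \<exists>a b. cp p = Fract a b \<and> b \<noteq> 0" by (metis Fract_cases)
  then obtain a b where ab: "\<And>p. cp p = Fract (a p) (b p)" "\<And>p. b p \<noteq> 0" by metis
  define D where "D = (\<Prod>p\<in>UNIV. b p)"
  define U where "U p = a p * (\<Prod>q\<in>UNIV-{p}. b q)" for p
  have "D \<noteq> 0" using ab(2) by (simp add: D_def)
  have coeff: "to_fract D * cp p = to_fract (U p)" for p
  proof -
    have "D = b p * (\<Prod>q\<in>UNIV-{p}. b q)" unfolding D_def by (simp add: prod.remove)
    then show ?thesis using ab by (simp add: U_def to_fract_def eq_fract ac_simps)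
  qed
  show thesis
  proof (rule that[OF \<open>D \<noteq> 0\<close>], intro ballI)
    fix I :: "'a set" assume "I \<in> order_ideals"
    then have "to_fract D * (F I - G I) = (\<Sum>p\<in>UNIV. to_fract D * cp p * Tq p I)"
      using cp by (simp add: sum_distrib_left mult.assoc)
    also have "\<dots> = to_fract (\<Sum>p\<in>UNIV. U p * Tq_poly p I)"
      by (simp add: coeff Tq_eq_to_fract)
    finally show "to_fract D * (F I - G I) = to_fract (\<Sum>p\<in>UNIV. U p * Tq_poly p I)" .
  qed
qed

lemma Tq_poly_identity_eval:
  fixes G :: "'a::{finite,order} set \<Rightarrow> real poly"
  assumes "0 < x" and "D \<noteq> 0" and "\<forall>I\<in>order_ideals. D * G I = (\<Sum>p\<in>UNIV. U p * Tq_poly p I)"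
  shows "\<exists>d u. d \<noteq> 0 \<and> (\<forall>I\<in>order_ideals. d * poly (G I) x = (\<Sum>p\<in>UNIV. u p * Tq_at x p I))"
  using assms(2,3)
proof (induction "degree D" arbitrary: D U rule: less_induct)
  case less
  have eval: "poly D x * poly (G I) x = (\<Sum>p\<in>UNIV. poly (U p) x * Tq_at x p I)"
    if "I \<in> order_ideals" for I
  proof -
    have "poly (D * G I) x = poly (\<Sum>p\<in>UNIV. U p * Tq_poly p I) x"
      using less.prems(2) that by simp
    then show ?thesis by (simp add: poly_sum)
  qed
  show ?case
  proof (cases "poly D x = 0")
    case False
    then show ?thesis
      using eval by (intro exI[of _ "poly D x"] exI[of _ "\<lambda>p. poly (U p) x"]) simp
  next
    case True
    \<comment> \<open>Then, by independence, every \<open>U p\<close> vanishes at \<open>x\<close> too and the factor \<open>q - x\<close> cancels.\<close>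
    have "poly (U p) x = 0" for p
      using Tq_at_linear_independent[OF \<open>0 < x\<close>, of "\<lambda>p. poly (U p) x"] eval True by simp
    then have "\<forall>p. \<exists>V. U p = [:-x, 1:] * V" by (simp add: poly_eq_0_iff_dvd dvd_def)
    then obtain V where V: "\<And>p. U p = [:-x, 1:] * V p" by metis
    obtain D' where D': "D = [:-x, 1:] * D'" using True by (auto simp: poly_eq_0_iff_dvd)
    then have "D' \<noteq> 0" using less.prems(1) by auto
    then have "degree D' < degree D" unfolding D' by (subst degree_mult_eq) auto
    moreover have "\<forall>I\<in>order_ideals. D' * G I = (\<Sum>p\<in>UNIV. V p * Tq_poly p I)"
    proof
      fix I :: "'a set" assume "I \<in> order_ideals"
      have "[:-x, 1:] * (D' * G I) = D * G I" by (simp only: D' mult.assoc)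
      also have "\<dots> = (\<Sum>p\<in>UNIV. U p * Tq_poly p I)" using less.prems(2) \<open>I \<in> order_ideals\<close> by blast
      also have "\<dots> = [:-x, 1:] * (\<Sum>p\<in>UNIV. V p * Tq_poly p I)"
        by (simp only: V mult.assoc sum_distrib_left)
      finally show "D' * G I = (\<Sum>p\<in>UNIV. V p * Tq_poly p I)"
        using mult_left_cancel[of "[:-x, 1:]"] by simp
    qed
    ultimately show ?thesis by (rule less.hyps[OF _ \<open>D' \<noteq> 0\<close>])
  qed
qed

lemma fract_eval_Fract:
  assumes "poly b x \<noteq> 0"
  shows "fract_eval (Fract a b) x = poly a x / poly b x"
  unfolding fract_eval_def
proof (rule the_equality)
  show "\<exists>a' b'. Fract a b = Fract a' b' \<and> poly b' x \<noteq> 0 \<and> poly a x / poly b x = poly a' x / poly b' x"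
    using assms by blast
next
  fix v assume "\<exists>a' b'. Fract a b = Fract a' b' \<and> poly b' x \<noteq> 0 \<and> v = poly a' x / poly b' x"
  then obtain a' b' where eq: "Fract a b = Fract a' b'" and b': "poly b' x \<noteq> 0"
    and v: "v = poly a' x / poly b' x" by blast
  have "b \<noteq> 0" "b' \<noteq> 0" using assms b' by auto
  then have "poly a x * poly b' x = poly a' x * poly b x" using eq by (metis eq_fract(1) poly_mult)
  then show "v = poly a x / poly b x" using assms b' v by (simp add: frac_eq_eq)
qed

lemma q_equiv_const_specialize:
  fixes f :: "'a::{finite,order} set \<Rightarrow> real"
  assumes "q_equiv (\<lambda>I. const_fract (f I)) (\<lambda>_. c)" and "fract_defined_at c x" and "0 < x"
  obtains u where "\<forall>I\<in>order_ideals. f I = fract_eval c x + (\<Sum>p\<in>UNIV. u p * Tq_at x p I)"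
proof -
  obtain \<alpha> \<beta> where c: "c = Fract \<alpha> \<beta>" and \<beta>: "poly \<beta> x \<noteq> 0"
    using assms(2) by (auto simp: fract_defined_at_def)
  then have "\<beta> \<noteq> 0" by auto
  with c have "to_fract \<beta> * c = to_fract \<alpha>" by (simp add: to_fract_def eq_fract)
  obtain D U where "D \<noteq> 0" and DU: "\<forall>I\<in>order_ideals.
      to_fract D * (const_fract (f I) - c) = to_fract (\<Sum>p\<in>UNIV. U p * Tq_poly p I)"
    using q_equiv_clear_denominators[OF assms(1)] by blast
  have "D * (\<beta> * [:f I:] - \<alpha>) = (\<Sum>p\<in>UNIV. (\<beta> * U p) * Tq_poly p I)" if "I \<in> order_ideals" for I
  proof -
    have "const_fract (f I) = to_fract [:f I:]" by (simp add: const_fract_def to_fract_def)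
    then have "to_fract (D * (\<beta> * [:f I:] - \<alpha>)) = to_fract \<beta> * (to_fract D * (const_fract (f I) - c))"
      unfolding to_fract_mult to_fract_diff \<open>to_fract \<beta> * c = to_fract \<alpha>\<close>[symmetric]
      by (simp add: algebra_simps)
    also have "\<dots> = to_fract (\<Sum>p\<in>UNIV. (\<beta> * U p) * Tq_poly p I)"
      using DU that by (simp add: sum_distrib_left mult.assoc)
    finally show ?thesis by (simp only: to_fract_eq_iff)
  qed
  then obtain d u where "d \<noteq> 0"
    and du: "\<forall>I\<in>order_ideals. d * poly (\<beta> * [:f I:] - \<alpha>) x = (\<Sum>p\<in>UNIV. u p * Tq_at x p I)"
    using Tq_poly_identity_eval[OF \<open>0 < x\<close> \<open>D \<noteq> 0\<close>, of "\<lambda>I. \<beta> * [:f I:] - \<alpha>" "\<lambda>p. \<beta> * U p"]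
    by auto
  show thesis
  proof (rule that[of "\<lambda>p. u p / (d * poly \<beta> x)"], intro ballI)
    fix I :: "'a set" assume "I \<in> order_ideals"
    then have "(\<Sum>p\<in>UNIV. u p * Tq_at x p I) = d * (poly \<beta> x * f I - poly \<alpha> x)"
      using du by (simp add: mult.commute)
    then have "(\<Sum>p\<in>UNIV. u p / (d * poly \<beta> x) * Tq_at x p I) = f I - poly \<alpha> x / poly \<beta> x"
      using \<beta> \<open>d \<noteq> 0\<close> by (simp add: sum_divide_distrib[symmetric] field_simps)
    then show "f I = fract_eval c x + (\<Sum>p\<in>UNIV. u p / (d * poly \<beta> x) * Tq_at x p I)"
      using \<beta> by (simp add: c fract_eval_Fract)
  qed
qed

section \<open>Toggles and \<open>q\<close>-rowmotion\<close>

lemma finite_labelings: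
  assumes "finite F0" and "finite F1"
  shows "finite (labelings F0 F1 :: ('a::{finite,order} \<Rightarrow> 'b) set)"
proof (rule finite_subset)
  show "labelings F0 F1 \<subseteq> {L. \<forall>x. (x \<in> UNIV \<longrightarrow> L x \<in> F0 \<union> F1) \<and> (x \<notin> UNIV \<longrightarrow> L x = undefined)}"
    by (auto simp: labelings_def)
qed (use assms finite_set_of_finite_funs[of "UNIV :: 'a set" "F0 \<union> F1" undefined] in simp)

lemma labeling_range: "L \<in> labelings F0 F1 \<Longrightarrow> L x \<in> F0 \<union> F1"
  by (simp add: labelings_def)

lemma labeling_downward_closed: "L \<in> labelings F0 F1 \<Longrightarrow> x \<le> y \<Longrightarrow> L y \<in> F0 \<Longrightarrow> L x \<in> F0"
  by (auto simp: labelings_def order_ideals_def)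

lemma minimal_outside_cong:
  "(\<And>y. y \<le> p \<Longrightarrow> y \<in> I \<longleftrightarrow> y \<in> J) \<Longrightarrow> minimal_outside p I \<longleftrightarrow> minimal_outside p J"
  by (auto simp: minimal_outside_def)

lemma maximal_inside_cong:
  "(\<And>y. p \<le> y \<Longrightarrow> y \<in> I \<longleftrightarrow> y \<in> J) \<Longrightarrow> maximal_inside p I \<longleftrightarrow> maximal_inside p J"
  by (auto simp: maximal_inside_def)

lemma order_ideal_insert_minimal:
  "I \<in> order_ideals \<Longrightarrow> minimal_outside p I \<Longrightarrow> insert p I \<in> order_ideals"
  by (auto simp: order_ideals_def minimal_outside_def order.order_iff_strict)

lemma order_ideal_remove_maximal:
  "I \<in> order_ideals \<Longrightarrow> maximal_inside p I \<Longrightarrow> I - {p} \<in> order_ideals"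
  by (auto simp: order_ideals_def maximal_inside_def order.order_iff_strict)

lemma minimal_outside_iff_active:
  assumes "L \<in> labelings F0 F1" and "F0 \<inter> F1 = {}"
  shows "minimal_outside p (L -` F0) \<longleftrightarrow> active F0 F1 L p \<and> L p \<in> F1"
  using labeling_range[OF assms(1)] assms(2) by (auto simp: minimal_outside_def active_def)

lemma maximal_inside_iff_active:
  assumes "F0 \<inter> F1 = {}"
  shows "maximal_inside p (L -` F0) \<longleftrightarrow> active F0 F1 L p \<and> L p \<in> F0"
  using assms by (auto simp: maximal_inside_def active_def)

lemma active_labeling_iff:
  assumes "L \<in> labelings F0 F1" and "F0 \<inter> F1 = {}"
  shows "active F0 F1 L p \<longleftrightarrow> (\<forall>y. p < y \<longrightarrow> L y \<notin> F0) \<and> (\<forall>y. y < p \<longrightarrow> L y \<notin> F1)"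
proof -
  have "L x \<in> F0" if "x < y" "L y \<in> F0" for x y
    using labeling_downward_closed[OF assms(1)] that by (blast dest: less_imp_le)
  then show ?thesis using labeling_range[OF assms(1), of p] assms(2) by (auto simp: active_def)
qed

lemma toggle_other: "x \<noteq> p \<Longrightarrow> toggle F0 F1 \<theta> p L x = L x"
  by (simp add: toggle_def)

lemma toggle_in_labelings:
  assumes L: "L \<in> labelings F0 F1" and "F0 \<inter> F1 = {}" and \<theta>: "\<theta> ` (F0 \<union> F1) \<subseteq> F0 \<union> F1"
  shows "toggle F0 F1 \<theta> p L \<in> labelings F0 F1"
proof (cases "active F0 F1 L p")
  case False
  then show ?thesis using L by (simp add: toggle_def)
next
  case True
  define I where "I = L -` F0"
  have "I \<in> order_ideals" using L by (simp add: labelings_def I_def)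
  have "L(p := \<theta> (L p)) -` F0 = (if \<theta> (L p) \<in> F0 then insert p I else I - {p})"
    by (auto simp: I_def split: if_splits)
  moreover have "insert p I \<in> order_ideals" if "\<theta> (L p) \<in> F0"
  proof (cases "L p \<in> F0")
    case True
    then show ?thesis using \<open>I \<in> order_ideals\<close> by (simp add: I_def insert_absorb)
  next
    case False
    then have "minimal_outside p I"
      using minimal_outside_iff_active[OF L \<open>F0 \<inter> F1 = {}\<close>] True labeling_range[OF L, of p]
      by (simp add: I_def)
    then show ?thesis using \<open>I \<in> order_ideals\<close> by (rule order_ideal_insert_minimal[rotated])
  qed
  moreover have "I - {p} \<in> order_ideals" if "\<theta> (L p) \<notin> F0"
  proof (cases "L p \<in> F0")
    case True
    then have "maximal_inside p I"
      unfolding I_def using maximal_inside_iff_active[OF \<open>F0 \<inter> F1 = {}\<close>] \<open>active F0 F1 L p\<close> by blast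
    then show ?thesis using \<open>I \<in> order_ideals\<close> by (rule order_ideal_remove_maximal[rotated])
  next
    case False
    then show ?thesis using \<open>I \<in> order_ideals\<close> by (simp add: I_def)
  qed
  moreover have "\<forall>x. (L(p := \<theta> (L p))) x \<in> F0 \<union> F1"
    using labeling_range[OF L] \<theta> by auto
  ultimately show ?thesis using True by (simp add: toggle_def labelings_def split: if_splits)
qed

lemma active_toggle_iff:
  assumes L: "L \<in> labelings F0 F1" and "F0 \<inter> F1 = {}" and "\<theta> ` (F0 \<union> F1) \<subseteq> F0 \<union> F1"
  shows "active F0 F1 (toggle F0 F1 \<theta> p L) p \<longleftrightarrow> active F0 F1 L p"
  using active_labeling_iff[OF toggle_in_labelings[OF assms]] active_labeling_iff[OF L] assms(2)
  by (simp add: toggle_other)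

lemma inj_on_toggle:
  assumes "F0 \<inter> F1 = {}" and "\<theta> ` (F0 \<union> F1) \<subseteq> F0 \<union> F1" and "inj_on \<theta> (F0 \<union> F1)"
  shows "inj_on (toggle F0 F1 \<theta> p) (labelings F0 F1)"
proof (rule inj_onI)
  fix L1 L2 assume L1: "L1 \<in> labelings F0 F1" and L2: "L2 \<in> labelings F0 F1"
    and eq: "toggle F0 F1 \<theta> p L1 = toggle F0 F1 \<theta> p L2"
  have "active F0 F1 L1 p \<longleftrightarrow> active F0 F1 L2 p"
    by (metis active_toggle_iff[OF L1 assms(1,2)] active_toggle_iff[OF L2 assms(1,2)] eq)
  show "L1 = L2"
  proof (cases "active F0 F1 L1 p")
    case True
    then have upd: "L1(p := \<theta> (L1 p)) = L2(p := \<theta> (L2 p))"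
      using eq \<open>active F0 F1 L1 p \<longleftrightarrow> active F0 F1 L2 p\<close> by (simp add: toggle_def)
    then have "\<theta> (L1 p) = \<theta> (L2 p)" by (metis fun_upd_same)
    then have "L1 p = L2 p"
      using assms(3) labeling_range[OF L1] labeling_range[OF L2] by (meson inj_onD)
    then show ?thesis using upd by (metis fun_upd_triv fun_upd_upd)
  next
    case False
    then show ?thesis
      using eq \<open>active F0 F1 L1 p \<longleftrightarrow> active F0 F1 L2 p\<close> by (simp add: toggle_def)
  qed
qed

lemma qrowmotion_Nil [simp]: "qrowmotion F0 F1 \<theta> [] = id"
  by (simp add: qrowmotion_def)

lemma qrowmotion_Cons [simp]:
  "qrowmotion F0 F1 \<theta> (p # ps) = toggle F0 F1 \<theta> p \<circ> qrowmotion F0 F1 \<theta> ps"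
  by (simp add: qrowmotion_def)

lemma qrowmotion_append:
  "qrowmotion F0 F1 \<theta> (xs @ ys) = qrowmotion F0 F1 \<theta> xs \<circ> qrowmotion F0 F1 \<theta> ys"
  by (induction xs) (simp_all add: comp_assoc)

lemma qrowmotion_notin: "p \<notin> set ps \<Longrightarrow> qrowmotion F0 F1 \<theta> ps L p = L p"
  by (induction ps) (simp_all add: toggle_other)

lemma qrowmotion_in_labelings:
  assumes "F0 \<inter> F1 = {}" and "\<theta> ` (F0 \<union> F1) \<subseteq> F0 \<union> F1" and "L \<in> labelings F0 F1"
  shows "qrowmotion F0 F1 \<theta> ps L \<in> labelings F0 F1"
  by (induction ps) (simp_all add: assms toggle_in_labelings)

lemma bij_betw_qrowmotion:
  assumes "finite F0" and "finite F1" and "F0 \<inter> F1 = {}" and "bij_betw \<theta> (F0 \<union> F1) (F0 \<union> F1)"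
  shows "bij_betw (qrowmotion F0 F1 \<theta> ps) (labelings F0 F1) (labelings F0 F1 :: ('a::{finite,order} \<Rightarrow> 'b) set)"
proof -
  have \<theta>: "\<theta> ` (F0 \<union> F1) \<subseteq> F0 \<union> F1" "inj_on \<theta> (F0 \<union> F1)"
    using assms(4) by (auto simp: bij_betw_def)
  have maps: "qrowmotion F0 F1 \<theta> ps ` labelings F0 F1 \<subseteq> labelings F0 F1" for ps :: "'a list"
    using qrowmotion_in_labelings[OF assms(3) \<theta>(1)] by auto
  have "inj_on (qrowmotion F0 F1 \<theta> ps) (labelings F0 F1 :: ('a \<Rightarrow> 'b) set)"
  proof (induction ps)
    case (Cons p ps)
    have "inj_on (toggle F0 F1 \<theta> p) (qrowmotion F0 F1 \<theta> ps ` labelings F0 F1)"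
      using inj_on_toggle[OF assms(3) \<theta>] maps by (rule inj_on_subset)
    then show ?case using Cons.IH comp_inj_on by (metis qrowmotion_Cons)
  qed simp
  then show ?thesis
    using endo_inj_surj[OF finite_labelings[OF assms(1,2)] maps] by (simp add: bij_betw_def)
qed

section \<open>Orbits and potentials\<close>

lemma bij_betw_funpow_returns:
  assumes "finite X" and "bij_betw f X X" and "x \<in> X"
  obtains n where "0 < n" and "(f ^^ n) x = x"
proof -
  have X: "(f ^^ k) x \<in> X" and inj: "inj_on (f ^^ k) X" for k
    using bij_betw_funpow[OF assms(2), of k] assms(3) by (auto simp: bij_betw_def)
  have "card ((\<lambda>k. (f ^^ k) x) ` {..card X}) \<le> card X"
    using X by (intro card_mono[OF assms(1)]) auto
  then have "\<not> inj_on (\<lambda>k. (f ^^ k) x) {..card X}"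
    using card_image[of "\<lambda>k. (f ^^ k) x" "{..card X}"] by auto
  then obtain i j where "i \<noteq> j" and "(f ^^ i) x = (f ^^ j) x"
    unfolding inj_on_def by blast
  then obtain i j where "i < j" and eq: "(f ^^ i) x = (f ^^ j) x"
    by (cases "i < j") (auto simp: not_less_iff_gr_or_eq)
  have "(f ^^ i) ((f ^^ (j - i)) x) = (f ^^ (i + (j - i))) x"
    by (simp add: funpow_add)
  also have "\<dots> = (f ^^ i) x" using \<open>i < j\<close> eq by simp
  finally have "(f ^^ (j - i)) x = x"
    using inj_onD[OF inj] X assms(3) by blast
  then show thesis using that[of "j - i"] \<open>i < j\<close> by simp
qed

lemma orbit_of_period:
  assumes "finite X" and "bij_betw f X X" and "x \<in> X"
  obtains N where "0 < N" and "(f ^^ N) x = x"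
    and "bij_betw (\<lambda>k. (f ^^ k) x) {..<N} (orbit_of f x)"
proof -
  obtain n where "0 < n" and "(f ^^ n) x = x" using bij_betw_funpow_returns[OF assms] .
  define N where "N = (LEAST N. 0 < N \<and> (f ^^ N) x = x)"
  have N: "0 < N" "(f ^^ N) x = x"
    using LeastI[of "\<lambda>N. 0 < N \<and> (f ^^ N) x = x"] \<open>0 < n\<close> \<open>(f ^^ n) x = x\<close>
    by (auto simp: N_def)
  have "inj_on (\<lambda>k. (f ^^ k) x) {0..<N}"
  proof (rule inj_on_funpow_least[OF N(2)])
    fix m assume "0 < m" and "m < N"
    then show "(f ^^ m) x \<noteq> x"
      using not_less_Least[of m "\<lambda>N. 0 < N \<and> (f ^^ N) x = x"] by (simp add: N_def)
  qed
  moreover have "(\<lambda>k. (f ^^ k) x) ` {..<N} = orbit_of f x"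
  proof
    show "orbit_of f x \<subseteq> (\<lambda>k. (f ^^ k) x) ` {..<N}"
    proof
      fix y assume "y \<in> orbit_of f x"
      then obtain m where "y = (f ^^ (m mod N)) x"
        using funpow_mod_eq[OF N(2)] by (auto simp: orbit_of_def)
      then show "y \<in> (\<lambda>k. (f ^^ k) x) ` {..<N}" using N(1) by (auto intro: image_eqI)
    qed
  qed (auto simp: orbit_of_def)
  ultimately show thesis using that N by (simp add: bij_betw_def atLeast0LessThan)
qed

lemma sum_funpow_Suc_periodic:
  fixes g :: "'a \<Rightarrow> 'b::comm_monoid_add"
  assumes "(f ^^ N) x = x"
  shows "(\<Sum>k<N. g ((f ^^ Suc k) x)) = (\<Sum>k<N. g ((f ^^ k) x))"
proof (cases N)
  case (Suc M)
  have "(\<Sum>k<Suc M. g ((f ^^ Suc k) x)) = (\<Sum>k<M. g ((f ^^ Suc k) x)) + g x"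
    using assms Suc by simp
  also have "\<dots> = (\<Sum>k<Suc M. g ((f ^^ k) x))"
    by (simp only: sum.lessThan_Suc_shift funpow_0 add.commute)
  finally show ?thesis using Suc by simp
qed simp

lemma single_cycle_potential:
  fixes g :: "'b \<Rightarrow> 'c::ab_group_add"
  assumes cycle: "single_cycle_on \<theta> S" and "finite S" and "sum g S = 0"
  obtains \<phi> where "\<And>y. y \<in> S \<Longrightarrow> \<phi> (\<theta> y) - \<phi> y = g y"
proof (cases "S = {}")
  case False
  then obtain z where "z \<in> S" by blast
  have bij: "bij_betw \<theta> S S" using cycle by (simp add: single_cycle_on_def)
  obtain N where "0 < N" and N: "(\<theta> ^^ N) z = z"
    and orbit: "bij_betw (\<lambda>k. (\<theta> ^^ k) z) {..<N} (orbit_of \<theta> z)"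
    using orbit_of_period[OF \<open>finite S\<close> bij \<open>z \<in> S\<close>] .
  have "orbit_of \<theta> z = S"
    using cycle \<open>z \<in> S\<close> bij_betw_funpow[OF bij]
    by (fastforce simp: single_cycle_on_def orbit_of_def bij_betw_def)
  define e where "e = (\<lambda>k. (\<theta> ^^ k) z)"
  define j where "j = inv_into {..<N} e"
  define \<phi> where "\<phi> y = (\<Sum>i<j y. g (e i))" for y
  have e: "bij_betw e {..<N} S" using orbit \<open>orbit_of \<theta> z = S\<close> by (simp add: e_def)
  have je: "j (e k) = k" if "k < N" for k
    using bij_betw_inv_into_left[OF e] that by (simp add: j_def)
  have "(\<Sum>i<N. g (e i)) = 0" using sum.reindex_bij_betw[OF e, of g] assms(3) by simp
  show thesis
  proof (rule that)
    fix y assume "y \<in> S"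
    then obtain k where "k < N" and y: "y = e k" using e by (auto simp: bij_betw_def)
    show "\<phi> (\<theta> y) - \<phi> y = g y"
    proof (cases "Suc k < N")
      case True
      then have "j (\<theta> y) = Suc k" using je[of "Suc k"] by (simp add: y e_def)
      then show ?thesis using je[OF \<open>k < N\<close>] by (simp add: \<phi>_def y)
    next
      case False
      then have "Suc k = N" using \<open>k < N\<close> by simp
      then have "\<theta> y = e 0" using N by (simp add: y e_def flip: \<open>Suc k = N\<close>)
      then have "j (\<theta> y) = 0" using je[of 0] \<open>0 < N\<close> by simp
      moreover have "\<phi> y + g y = (\<Sum>i<N. g (e i))"
        using je[OF \<open>k < N\<close>] by (simp add: \<phi>_def y flip: \<open>Suc k = N\<close>)
      ultimately show ?thesis using \<open>(\<Sum>i<N. g (e i)) = 0\<close> by (simp add: \<phi>_def add_eq_0_iff)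
    qed
  qed
qed (use that in blast)

section \<open>The functions \<open>T\<^sub>p\<^sup>+ - (r/s) T\<^sub>p\<^sup>-\<close> are \<open>0\<close>-mesic\<close>

lemma linear_extension_split:
  assumes "linear_extension ps"
  obtains xs ys where "ps = xs @ p # ys" and "p \<notin> set xs" and "p \<notin> set ys"
    and "\<And>y. y < p \<Longrightarrow> y \<notin> set ys" and "\<And>y. p < y \<Longrightarrow> y \<notin> set xs"
proof -
  have "distinct ps" and "p \<in> set ps" using assms by (auto simp: linear_extension_def)
  then obtain xs ys where ps: "ps = xs @ p # ys" by (meson split_list)
  have ord: "i < j" if "i < length ps" "j < length ps" "ps ! i < ps ! j" for i j
    using assms that by (auto simp: linear_extension_def)
  have "y \<notin> set ys" if "y < p" for y
  proof
    assume "y \<in> set ys"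
    then obtain m where "m < length ys" and "ys ! m = y" by (auto simp: in_set_conv_nth)
    then show False
      using ord[of "length xs + Suc m" "length xs"] that by (simp add: ps nth_append)
  qed
  moreover have "y \<notin> set xs" if "p < y" for y
  proof
    assume "y \<in> set xs"
    then obtain m where "m < length xs" and "xs ! m = y" by (auto simp: in_set_conv_nth)
    then show False
      using ord[of "length xs" m] that by (simp add: ps nth_append)
  qed
  ultimately show thesis using that ps \<open>distinct ps\<close> by simp
qed

lemma qrowmotion_step_at:
  assumes L: "L \<in> labelings F0 F1" and disj: "F0 \<inter> F1 = {}" and \<theta>: "\<theta> ` (F0 \<union> F1) \<subseteq> F0 \<union> F1"
    and ps: "ps = xs @ p # ys" and "p \<notin> set xs" and "p \<notin> set ys"
    and "\<And>y. y < p \<Longrightarrow> y \<notin> set ys" and "\<And>y. p < y \<Longrightarrow> y \<notin> set xs"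
  obtains moves where "qrowmotion F0 F1 \<theta> ps L p = (if moves then \<theta> (L p) else L p)"
    and "minimal_outside p (L -` F0) \<longleftrightarrow> moves \<and> L p \<in> F1"
    and "maximal_inside p (qrowmotion F0 F1 \<theta> ps L -` F0) \<longleftrightarrow> moves \<and> \<theta> (L p) \<in> F0"
proof -
  define M where "M = qrowmotion F0 F1 \<theta> ys L"
  define T where "T = toggle F0 F1 \<theta> p M"
  have M: "M \<in> labelings F0 F1" using qrowmotion_in_labelings[OF disj \<theta> L] by (simp add: M_def)
  have M_below: "M y = L y" if "y \<le> p" for y
    using that assms(6,7) by (auto simp: M_def qrowmotion_notin order.order_iff_strict)
  have T_above: "qrowmotion F0 F1 \<theta> ps L y = T y" if "p \<le> y" for y
    using that assms(5,8)
    by (auto simp: ps qrowmotion_append M_def T_def qrowmotion_notin order.order_iff_strict)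
  have T_p: "T p = (if active F0 F1 M p then \<theta> (L p) else L p)"
    using M_below[of p] by (simp add: T_def toggle_def)
  show thesis
  proof (rule that[of "active F0 F1 M p"])
    show "qrowmotion F0 F1 \<theta> ps L p = (if active F0 F1 M p then \<theta> (L p) else L p)"
      using T_above[of p] T_p by simp
    have "minimal_outside p (L -` F0) \<longleftrightarrow> minimal_outside p (M -` F0)"
      by (rule minimal_outside_cong) (simp add: M_below)
    then show "minimal_outside p (L -` F0) \<longleftrightarrow> active F0 F1 M p \<and> L p \<in> F1"
      using minimal_outside_iff_active[OF M disj] M_below[of p] by simp
    have "maximal_inside p (qrowmotion F0 F1 \<theta> ps L -` F0) \<longleftrightarrow> maximal_inside p (T -` F0)"
      by (rule maximal_inside_cong) (simp add: T_above)
    also have "\<dots> \<longleftrightarrow> active F0 F1 T p \<and> T p \<in> F0"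
      by (rule maximal_inside_iff_active[OF disj])
    also have "\<dots> \<longleftrightarrow> active F0 F1 M p \<and> \<theta> (L p) \<in> F0"
      using active_toggle_iff[OF M disj \<theta>] T_p by (auto simp: T_def)
    finally show "maximal_inside p (qrowmotion F0 F1 \<theta> ps L -` F0) \<longleftrightarrow> active F0 F1 M p \<and> \<theta> (L p) \<in> F0" .
  qed
qed

lemma Tq_at_sum_over_period:
  fixes ps :: "'a::{finite,order} list" and L :: "'a \<Rightarrow> 'b"
  assumes "finite F0" and "finite F1" and disj: "F0 \<inter> F1 = {}"
    and "card F0 = s" and "card F1 = r" and "0 < s"
    and cycle: "single_cycle_on \<theta> (F0 \<union> F1)" and "linear_extension ps"
    and L: "L \<in> labelings F0 F1" and period: "(qrowmotion F0 F1 \<theta> ps ^^ N) L = L"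
  shows "(\<Sum>k<N. Tq_at (real r / real s) p ((qrowmotion F0 F1 \<theta> ps ^^ k) L -` F0)) = 0"
proof -
  define x where "x = real r / real s"
  define \<rho> where "\<rho> = qrowmotion F0 F1 \<theta> ps"
  define g where "g y = of_bool (y \<in> F1) - x * of_bool (\<theta> y \<in> F0)" for y
  have bij: "bij_betw \<theta> (F0 \<union> F1) (F0 \<union> F1)" using cycle by (simp add: single_cycle_on_def)
  then have \<theta>: "\<theta> ` (F0 \<union> F1) \<subseteq> F0 \<union> F1" by (simp add: bij_betw_def)
  have "(\<Sum>y\<in>F0 \<union> F1. of_bool (\<theta> y \<in> F0) :: real) = (\<Sum>y\<in>F0 \<union> F1. of_bool (y \<in> F0))"
    by (rule sum.reindex_bij_betw[OF bij])
  then have "sum g (F0 \<union> F1) = real r - x * real s"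
    using assms(1-5) by (simp add: g_def sum_subtractf sum_distrib_left[symmetric] Int_absorb1)
  then obtain \<phi> where \<phi>: "\<And>y. y \<in> F0 \<union> F1 \<Longrightarrow> \<phi> (\<theta> y) - \<phi> y = g y"
    using single_cycle_potential[OF cycle] assms(1,2,6) by (auto simp: x_def)
  obtain xs ys where split: "ps = xs @ p # ys" "p \<notin> set xs" "p \<notin> set ys"
    "\<And>y. y < p \<Longrightarrow> y \<notin> set ys" "\<And>y. p < y \<Longrightarrow> y \<notin> set xs"
    using linear_extension_split[OF \<open>linear_extension ps\<close>] by blast
  have step: "\<phi> (\<rho> M p) - \<phi> (M p)
      = of_bool (minimal_outside p (M -` F0)) - x * of_bool (maximal_inside p (\<rho> M -` F0))"
    if M: "M \<in> labelings F0 F1" for M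
  proof -
    obtain moves where "\<rho> M p = (if moves then \<theta> (M p) else M p)"
      and "minimal_outside p (M -` F0) \<longleftrightarrow> moves \<and> M p \<in> F1"
      and "maximal_inside p (\<rho> M -` F0) \<longleftrightarrow> moves \<and> \<theta> (M p) \<in> F0"
      using qrowmotion_step_at[OF M disj \<theta> split] unfolding \<rho>_def by blast
    then show ?thesis using \<phi>[OF labeling_range[OF M]] by (cases moves) (simp_all add: g_def)
  qed
  define tplus where "tplus k = (of_bool (minimal_outside p ((\<rho> ^^ k) L -` F0)) :: real)" for k
  define tminus where "tminus k = (of_bool (maximal_inside p ((\<rho> ^^ k) L -` F0)) :: real)" for k
  have "(\<rho> ^^ k) L \<in> labelings F0 F1" for k
    by (induction k) (simp_all add: L \<rho>_def qrowmotion_in_labelings[OF disj \<theta>])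
  then have "(\<Sum>k<N. tplus k - x * tminus (Suc k)) = (\<Sum>k<N. \<phi> ((\<rho> ^^ Suc k) L p) - \<phi> ((\<rho> ^^ k) L p))"
    using step by (simp add: tplus_def tminus_def)
  also have "\<dots> = 0"
    using sum_funpow_Suc_periodic[OF period[folded \<rho>_def], of "\<lambda>M. \<phi> (M p)"]
    by (simp add: sum_subtractf)
  finally have "(\<Sum>k<N. tplus k) = x * (\<Sum>k<N. tminus (Suc k))"
    by (simp add: sum_subtractf sum_distrib_left)
  also have "(\<Sum>k<N. tminus (Suc k)) = (\<Sum>k<N. tminus k)"
    unfolding tminus_def by (rule sum_funpow_Suc_periodic[OF period[folded \<rho>_def]])
  finally show ?thesis
    by (simp add: Tq_at_def sum_subtractf sum_distrib_left tplus_def tminus_def x_def \<rho>_def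
        del: sum_of_bool_eq sum_mult_of_bool_eq)
qed

lemma mesic_Tq_at_combination:
  fixes f :: "'a::{finite,order} set \<Rightarrow> real" and ps :: "'a list"
  assumes "finite F0" and "finite F1" and "F0 \<inter> F1 = {}"
    and "card F0 = s" and "card F1 = r" and "0 < s"
    and cycle: "single_cycle_on \<theta> (F0 \<union> F1)" and "linear_extension ps"
    and f: "\<forall>I\<in>order_ideals. f I = c + (\<Sum>p\<in>UNIV. u p * Tq_at (real r / real s) p I)"
  shows "mesic (qrowmotion F0 F1 \<theta> ps) (labelings F0 F1) (\<lambda>L. f (L -` F0)) c"
  unfolding mesic_def
proof
  define \<rho> where "\<rho> = qrowmotion F0 F1 \<theta> ps"
  fix L :: "'a \<Rightarrow> 'b" assume L: "L \<in> labelings F0 F1"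
  have "bij_betw \<theta> (F0 \<union> F1) (F0 \<union> F1)" using cycle by (simp add: single_cycle_on_def)
  then have bij: "bij_betw \<rho> (labelings F0 F1) (labelings F0 F1)"
    unfolding \<rho>_def by (rule bij_betw_qrowmotion[OF assms(1-3)])
  obtain N where "0 < N" and period: "(\<rho> ^^ N) L = L"
    and orbit: "bij_betw (\<lambda>k. (\<rho> ^^ k) L) {..<N} (orbit_of \<rho> L)"
    using orbit_of_period[OF finite_labelings[OF assms(1,2)] bij L] .
  have "(\<rho> ^^ k) L -` F0 \<in> order_ideals" for k
    using bij_betw_apply[OF bij_betw_funpow[OF bij] L] by (simp add: labelings_def)
  then have "(\<Sum>M\<in>orbit_of \<rho> L. f (M -` F0))
      = (\<Sum>k<N. c + (\<Sum>p\<in>UNIV. u p * Tq_at (real r / real s) p ((\<rho> ^^ k) L -` F0)))"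
    using f by (simp add: sum.reindex_bij_betw[OF orbit, symmetric])
  also have "\<dots> = N * c + (\<Sum>p\<in>UNIV. u p * (\<Sum>k<N. Tq_at (real r / real s) p ((\<rho> ^^ k) L -` F0)))"
    by (simp add: sum.distrib sum.swap[of _ "{..<N}"] sum_distrib_left)
  also have "\<dots> = N * c"
    using Tq_at_sum_over_period[OF assms(1-8) L period[unfolded \<rho>_def]] by (simp add: \<rho>_def)
  finally show "(\<Sum>M\<in>orbit_of \<rho> L. f (M -` F0)) / real (card (orbit_of \<rho> L)) = c"
    using bij_betw_same_card[OF orbit] \<open>0 < N\<close> by (simp add: \<rho>_def)
qed

theorem proposition5p7:
  fixes f :: "'a::{finite,order} set \<Rightarrow> real"
    and c :: "real poly fract"
    and r s :: nat
    and F0 F1 :: "'b set"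
    and \<theta> :: "'b \<Rightarrow> 'b"
    and ps :: "'a list"
  assumes "q_equiv (\<lambda>I. const_fract (f I)) (\<lambda>_. c)"
    and "0 < r" and "0 < s"
    and "finite F0" and "finite F1" and "F0 \<inter> F1 = {}"
    and "card F0 = s" and "card F1 = r"
    and "single_cycle_on \<theta> (F0 \<union> F1)"
    and "linear_extension ps"
    and "fract_defined_at c (real r / real s)"
  shows "mesic (qrowmotion F0 F1 \<theta> ps) (labelings F0 F1) (\<lambda>L. f (L -` F0))
           (fract_eval c (real r / real s))"
proof -
  obtain u where "\<forall>I\<in>order_ideals.
      f I = fract_eval c (real r / real s) + (\<Sum>p\<in>UNIV. u p * Tq_at (real r / real s) p I)"
    using q_equiv_const_specialize[OF assms(1,11)] assms(2,3) by auto
  then show ?thesis by (rule mesic_Tq_at_combination[OF assms(4-8,3,9,10)])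
qed

end
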